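(* Let $\gamma>0$, $\alpha=2/\gamma^2$ and $n\ge0$. Then $\mathfrak{B}^\gamma_{RBF}[\psi_n^\alpha](z)=e_n^\gamma(z)$ for all $z\in\mathbb{C}$, and $\|\mathfrak{B}^\gamma_{RBF}[\psi_n^\alpha]\|_{\mathcal{H}_\gamma}=\|\psi_n^\alpha\|_{L^2(\mathbb{R})}=1$.
   Context: $\psi_n^\alpha(x)=\left(\frac{\alpha}{\pi}\right)^{1/4}(2^nn!)^{-1/2}H_n(\sqrt\alpha x)e^{-\alpha x^2/2}$ ($H_n$ physicists' Hermite polynomials), the $\alpha$-weighted normalized Hermite functions, an orthonormal basis of $L^2(\mathbb{R})$. $e_n^\gamma(z)=\sqrt{\frac{2^n}{\gamma^{2n}n!}}z^n\exp(-z^2/\gamma^2)$. $\mathcal{H}_\gamma$ is the Hilbert space of entire $f$ with $\|f\|^2=\frac{2}{\pi\gamma^2}\int_{\mathbb{C}}|f(z)|^2\exp\left(\frac{(z-\overline z)^2}{\gamma^2}\right)dA(z)<\infty$. The RBF Segal–Bargmann transform is $\mathfrak{B}^\gamma_{RBF}[\varphi](z)=\int_{\mathbb{R}}\mathcal{A}^\gamma_{RBF}(z,x)\varphi(x)dx$, where $\mathcal{A}^\gamma_{RBF}(z,x)=\sum_{m\ge0}e_m^\gamma(z)\psi_m^{2/\gamma^2}(x)$. *)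

theory Defs
  imports "HOL-Analysis.Analysis"
begin

fun hermite :: "nat \<Rightarrow> real \<Rightarrow> real" where
  "hermite 0 x = 1"
| "hermite (Suc 0) x = 2 * x"
| "hermite (Suc (Suc n)) x = 2 * x * hermite (Suc n) x - 2 * real (Suc n) * hermite n x"

definition hermite_fun :: "real \<Rightarrow> nat \<Rightarrow> real \<Rightarrow> real" where
  "hermite_fun \<alpha> n x = (\<alpha> / pi) powr (1/4) * (2 ^ n * fact n) powr (-1/2)
      * hermite n (sqrt \<alpha> * x) * exp (- \<alpha> * x\<^sup>2 / 2)"

definition e_fun :: "real \<Rightarrow> nat \<Rightarrow> complex \<Rightarrow> complex" where
  "e_fun \<gamma> n z = complex_of_real (sqrt (2 ^ n / (\<gamma> ^ (2 * n) * fact n)))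
      * z ^ n * exp (- z\<^sup>2 / complex_of_real (\<gamma>\<^sup>2))"

definition rbf_kernel :: "real \<Rightarrow> complex \<Rightarrow> real \<Rightarrow> complex" where
  "rbf_kernel \<gamma> z x = (\<Sum>m. e_fun \<gamma> m z * complex_of_real (hermite_fun (2 / \<gamma>\<^sup>2) m x))"

definition rbf_SB :: "real \<Rightarrow> (real \<Rightarrow> real) \<Rightarrow> complex \<Rightarrow> complex" where
  "rbf_SB \<gamma> \<phi> z = (LINT x|(lborel :: real measure). rbf_kernel \<gamma> z x * complex_of_real (\<phi> x))"

text \<open>Weight exp((z - conj z)^2 / gamma^2) (a real number, written via Re).\<close>
definition H_weight :: "real \<Rightarrow> complex \<Rightarrow> real" where
  "H_weight \<gamma> z = Re (exp ((z - cnj z)\<^sup>2 / complex_of_real (\<gamma>\<^sup>2)))"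

definition H_space :: "real \<Rightarrow> (complex \<Rightarrow> complex) set" where
  "H_space \<gamma> = {f. f holomorphic_on UNIV \<and>
      integrable (lborel :: complex measure) (\<lambda>z. (cmod (f z))\<^sup>2 * H_weight \<gamma> z)}"

definition H_norm :: "real \<Rightarrow> (complex \<Rightarrow> complex) \<Rightarrow> real" where
  "H_norm \<gamma> f = sqrt (2 / (pi * \<gamma>\<^sup>2)
      * (LINT z|(lborel :: complex measure). (cmod (f z))\<^sup>2 * H_weight \<gamma> z))"

definition L2_norm_real :: "(real \<Rightarrow> real) \<Rightarrow> real" where
  "L2_norm_real \<phi> = sqrt (LINT x|(lborel :: real measure). (\<phi> x)\<^sup>2)"

end

theory Submission
  imports Defs "HOL-Probability.Probability" "HOL-Real_Asymp.Real_Asymp"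
begin

text \<open>
  The Hermite functions \<open>\<psi>\<^sub>m\<close> are orthonormal in \<open>L\<^sup>2(\<real>)\<close>, by integration by parts
  in the orthogonality relations of the Hermite polynomials. Since \<open>\<Sum>\<^sub>m |e\<^sub>m(z)| < \<infinity>\<close>, the
  kernel series may be integrated against \<open>\<psi>\<^sub>n\<close> term by term, and orthonormality leaves exactly
  \<open>e\<^sub>n(z)\<close>. For the norm, \<open>|e\<^sub>n(z)|\<^sup>2\<close> times the weight is a constant times
  \<open>|z|\<^sup>2\<^sup>n exp(-k |z|\<^sup>2)\<close> with \<open>k = 2 / \<gamma>\<^sup>2\<close>, whose integral over the plane is \<open>\<pi> n! / k\<^sup>n\<^sup>+\<^sup>1\<close>.
\<close>

section \<open>Hermite polynomials\<close>

lemma hermite_Suc: "hermite (Suc m) y = 2 * y * hermite m y - 2 * real m * hermite (m - 1) y"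
  by (cases m) auto

lemma hermite_has_real_derivative:
  "(hermite m has_real_derivative 2 * real m * hermite (m - 1) y) (at y)"
proof (induction m arbitrary: y rule: induct_nat_012)
  case 0
  have "hermite 0 = (\<lambda>_. 1)"
    by (rule ext) simp
  then show ?case by simp
next
  case 1
  have "hermite (Suc 0) = (\<lambda>y. 2 * y)"
    by (rule ext) simp
  then show ?case by (auto intro!: derivative_eq_intros)
next
  case (ge2 n)
  have "hermite (Suc (Suc n)) = (\<lambda>y. 2 * y * hermite (Suc n) y - 2 * real (Suc n) * hermite n y)"
    by (rule ext) simp
  moreover have "((\<lambda>y. 2 * y * hermite (Suc n) y - 2 * real (Suc n) * hermite n y) has_real_derivative
      2 * hermite (Suc n) y + 2 * y * (2 * real (Suc n) * hermite n y)
      - 2 * real (Suc n) * (2 * real n * hermite (n - 1) y)) (at y)"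
    using ge2.IH by (auto intro!: derivative_eq_intros)
  moreover have "2 * hermite (Suc n) y + 2 * y * (2 * real (Suc n) * hermite n y)
      - 2 * real (Suc n) * (2 * real n * hermite (n - 1) y) = 2 * real (Suc (Suc n)) * hermite (Suc n) y"
    by (simp only: hermite_Suc[of n y]) (simp add: algebra_simps)
  ultimately show ?case by simp
qed

lemma has_real_derivative_hermite [derivative_intros]:
  "(f has_real_derivative f') (at x within S) \<Longrightarrow>
   ((\<lambda>x. hermite m (f x)) has_real_derivative 2 * real m * hermite (m - 1) (f x) * f') (at x within S)"
  using DERIV_chain2[OF hermite_has_real_derivative] by blast

lemma continuous_on_hermite [continuous_intros]:
  "continuous_on S f \<Longrightarrow> continuous_on S (\<lambda>x. hermite m (f x))"
  using continuous_on_compose2[of UNIV "hermite m"]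
  by (metis continuous_at_imp_continuous_on DERIV_isCont hermite_has_real_derivative subset_UNIV)

lemma borel_measurable_hermite [measurable]: "hermite m \<in> borel_measurable borel"
  by (intro borel_measurable_continuous_onI continuous_on_hermite continuous_on_id)

lemma abs_le_exp_square:
  assumes "c > 0"
  shows "2 * \<bar>y\<bar> \<le> exp (c * y\<^sup>2) / sqrt c"
proof -
  have "2 * sqrt c * \<bar>y\<bar> \<le> 1 + c * y\<^sup>2"
    using assms sum_squares_bound[of "sqrt c * \<bar>y\<bar>" 1]
    by (simp add: power_mult_distrib algebra_simps)
  also have "\<dots> \<le> exp (c * y\<^sup>2)"
    by (rule exp_ge_add_one_self)
  finally show ?thesis
    using assms by (simp add: field_simps)
qed

lemma abs_hermite_le_exp_square:
  assumes "d > 0"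
  shows "\<exists>K. \<forall>y. \<bar>hermite m y\<bar> \<le> K * exp (d * y\<^sup>2)"
  using assms
proof (induction m arbitrary: d rule: induct_nat_012)
  case 0
  show ?case
    using \<open>d > 0\<close> by (intro exI[of _ 1]) simp
next
  case 1
  show ?case
    using abs_le_exp_square[OF \<open>d > 0\<close>] by (intro exI[of _ "1 / sqrt d"]) (simp add: abs_mult)
next
  case (ge2 n)
  obtain K1 where K1: "\<And>y. \<bar>hermite (Suc n) y\<bar> \<le> K1 * exp (d / 2 * y\<^sup>2)"
    using ge2.IH(2)[of "d / 2"] ge2.prems by auto
  obtain K0 where K0: "\<And>y. \<bar>hermite n y\<bar> \<le> K0 * exp (d * y\<^sup>2)"
    using ge2.IH(1) ge2.prems by auto
  have "\<bar>hermite (Suc (Suc n)) y\<bar> \<le> (K1 / sqrt (d / 2) + 2 * real (Suc n) * K0) * exp (d * y\<^sup>2)" for y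
  proof -
    have "\<bar>hermite (Suc (Suc n)) y\<bar> \<le> 2 * \<bar>y\<bar> * \<bar>hermite (Suc n) y\<bar> + 2 * real (Suc n) * \<bar>hermite n y\<bar>"
      unfolding hermite.simps by (rule order_trans[OF abs_triangle_ineq4]) (simp add: abs_mult)
    also have "\<dots> \<le> exp (d / 2 * y\<^sup>2) / sqrt (d / 2) * (K1 * exp (d / 2 * y\<^sup>2))
        + 2 * real (Suc n) * (K0 * exp (d * y\<^sup>2))"
      using ge2.prems by (intro add_mono mult_mono abs_le_exp_square K1 mult_left_mono K0) auto
    also have "\<dots> = (K1 / sqrt (d / 2) + 2 * real (Suc n) * K0) * exp (d * y\<^sup>2)"
      by (simp add: field_simps flip: exp_add)
    finally show ?thesis .
  qed
  then show ?case by blast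
qed

section \<open>Orthonormality of the Hermite functions\<close>

lemma has_bochner_integral_gaussian:
  assumes "c > 0"
  shows "has_bochner_integral lborel (\<lambda>y::real. exp (- c * y\<^sup>2)) (sqrt (pi / c))"
proof -
  define \<sigma> where "\<sigma> = 1 / sqrt (2 * c)"
  have \<sigma>: "\<sigma> > 0" "\<sigma>\<^sup>2 = 1 / (2 * c)"
    using assms by (auto simp: \<sigma>_def power_divide)
  have "has_bochner_integral lborel (\<lambda>y. sqrt (pi / c) * normal_density 0 \<sigma> y) (sqrt (pi / c) * 1)"
    using integrable_normal_density[of \<sigma> 0] integral_normal_density[of \<sigma> 0] \<sigma>(1)
    by (intro has_bochner_integral_mult_right) (simp add: has_bochner_integral_iff)
  moreover have "sqrt (pi / c) * normal_density 0 \<sigma> y = exp (- c * y\<^sup>2)" for y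
    using assms unfolding normal_density_def \<sigma>(2) by (simp add: field_simps real_sqrt_divide)
  ultimately show ?thesis by simp
qed

lemma abs_hermite_gauss_product_le:
  "\<exists>K. \<forall>y. \<bar>hermite m y * hermite n y * exp (- y\<^sup>2)\<bar> \<le> K * exp (- (1/2) * y\<^sup>2)"
proof -
  obtain K1 where K1: "\<And>y. \<bar>hermite m y\<bar> \<le> K1 * exp (1/4 * y\<^sup>2)"
    using abs_hermite_le_exp_square[of "1/4" m] by auto
  obtain K2 where K2: "\<And>y. \<bar>hermite n y\<bar> \<le> K2 * exp (1/4 * y\<^sup>2)"
    using abs_hermite_le_exp_square[of "1/4" n] by auto
  have "\<bar>hermite m y * hermite n y * exp (- y\<^sup>2)\<bar> \<le> (K1 * K2) * exp (- (1/2) * y\<^sup>2)" for y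
  proof -
    have "\<bar>hermite m y * hermite n y * exp (- y\<^sup>2)\<bar> = \<bar>hermite m y\<bar> * \<bar>hermite n y\<bar> * exp (- y\<^sup>2)"
      by (simp add: abs_mult)
    also have "\<dots> \<le> (K1 * exp (1/4 * y\<^sup>2)) * (K2 * exp (1/4 * y\<^sup>2)) * exp (- y\<^sup>2)"
      using order_trans[OF abs_ge_zero K1[of 0]] by (intro mult_right_mono mult_mono K1 K2) auto
    also have "\<dots> = (K1 * K2) * exp (- (1/2) * y\<^sup>2)"
      by (simp flip: exp_add)
    finally show ?thesis .
  qed
  then show ?thesis by blast
qed

lemma integrable_hermite_gauss_product:
  "integrable lborel (\<lambda>y. hermite m y * hermite n y * exp (- y\<^sup>2))"
proof -
  obtain K where K: "\<And>y. \<bar>hermite m y * hermite n y * exp (- y\<^sup>2)\<bar> \<le> K * exp (- (1/2) * y\<^sup>2)"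
    using abs_hermite_gauss_product_le by blast
  show ?thesis
  proof (rule Bochner_Integration.integrable_bound)
    show "integrable lborel (\<lambda>y. K * exp (- (1/2) * y\<^sup>2))"
      using has_bochner_integral_gaussian[of "1/2"] by (auto simp: has_bochner_integral_iff)
    show "AE y in lborel. norm (hermite m y * hermite n y * exp (- y\<^sup>2)) \<le> norm (K * exp (- (1/2) * y\<^sup>2))"
      using K by (auto intro: order_trans[OF _ abs_ge_self])
  qed measurable
qed

lemma hermite_gauss_product_tendsto_0:
  "((\<lambda>y. hermite m y * hermite n y * exp (- y\<^sup>2)) \<longlongrightarrow> 0) at_top"
  "((\<lambda>y. hermite m y * hermite n y * exp (- y\<^sup>2)) \<longlongrightarrow> 0) at_bot"
proof -
  obtain K where K: "\<And>y. \<bar>hermite m y * hermite n y * exp (- y\<^sup>2)\<bar> \<le> K * exp (- (1/2) * y\<^sup>2)"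
    using abs_hermite_gauss_product_le by blast
  have "((\<lambda>y::real. K * exp (- (1/2) * y\<^sup>2)) \<longlongrightarrow> 0) at_top"
    by real_asymp
  then show "((\<lambda>y. hermite m y * hermite n y * exp (- y\<^sup>2)) \<longlongrightarrow> 0) at_top"
    by (rule Lim_null_comparison[rotated]) (use K in auto)
  have "((\<lambda>y::real. K * exp (- (1/2) * y\<^sup>2)) \<longlongrightarrow> 0) at_bot"
    by real_asymp
  then show "((\<lambda>y. hermite m y * hermite n y * exp (- y\<^sup>2)) \<longlongrightarrow> 0) at_bot"
    by (rule Lim_null_comparison[rotated]) (use K in auto)
qed

lemma integral_eq_0_if_antiderivative_vanishes_at_infinity:
  fixes F f :: "real \<Rightarrow> real"
  assumes "\<And>x. (F has_real_derivative f x) (at x)" and "continuous_on UNIV f"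
    and "integrable lborel f" and "(F \<longlongrightarrow> 0) at_top" and "(F \<longlongrightarrow> 0) at_bot"
  shows "integral\<^sup>L lborel f = 0"
proof -
  have "(LBINT x=-\<infinity>..\<infinity>. f x) = 0 - 0"
  proof (rule interval_integral_FTC_integrable)
    show "(F has_vector_derivative f x) (at x)" for x
      using assms(1) has_real_derivative_iff_has_vector_derivative by blast
    show "isCont f x" for x
      using assms(2) by (simp add: continuous_on_eq_continuous_at)
    show "set_integrable lborel (einterval (- \<infinity>) \<infinity>) f"
      using assms(3) by (simp add: set_integrable_def)
    show "((F \<circ> real_of_ereal) \<longlongrightarrow> 0) (at_right (- \<infinity>))"
      using assms(5) by (simp add: ereal_tendsto_simps)
    show "((F \<circ> real_of_ereal) \<longlongrightarrow> 0) (at_left \<infinity>)"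
      using assms(4) by (simp add: ereal_tendsto_simps)
  qed auto
  then show ?thesis
    by (simp add: interval_lebesgue_integral_def set_lebesgue_integral_def)
qed

text \<open>Integration by parts: the antiderivative is \<open>H\<^sub>m H\<^sub>n e\<^sup>-\<^sup>y\<^sup>2\<close>, and
  \<open>(H\<^sub>n e\<^sup>-\<^sup>y\<^sup>2)' = - H\<^sub>n\<^sub>+\<^sub>1 e\<^sup>-\<^sup>y\<^sup>2\<close>.\<close>
lemma integral_hermite_gauss_Suc:
  "(LINT y|lborel. hermite m y * hermite (Suc n) y * exp (- y\<^sup>2)) =
   2 * real m * (LINT y|lborel. hermite (m - 1) y * hermite n y * exp (- y\<^sup>2))"
proof -
  define f where "f y = 2 * real m * (hermite (m - 1) y * hermite n y * exp (- y\<^sup>2))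
    - hermite m y * hermite (Suc n) y * exp (- y\<^sup>2)" for y
  have "integral\<^sup>L lborel f = 0"
  proof (rule integral_eq_0_if_antiderivative_vanishes_at_infinity)
    show "((\<lambda>y. hermite m y * hermite n y * exp (- y\<^sup>2)) has_real_derivative f x) (at x)" for x
    proof -
      have "((\<lambda>y. hermite m y * hermite n y * exp (- y\<^sup>2)) has_real_derivative
        2 * real m * hermite (m - 1) x * hermite n x * exp (- x\<^sup>2)
        + hermite m x * (2 * real n * hermite (n - 1) x) * exp (- x\<^sup>2)
        - hermite m x * hermite n x * (2 * x * exp (- x\<^sup>2))) (at x)"
        by (auto intro!: derivative_eq_intros simp: algebra_simps)
      also have "2 * real m * hermite (m - 1) x * hermite n x * exp (- x\<^sup>2)
        + hermite m x * (2 * real n * hermite (n - 1) x) * exp (- x\<^sup>2)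
        - hermite m x * hermite n x * (2 * x * exp (- x\<^sup>2)) = f x"
        unfolding f_def by (simp only: hermite_Suc[of n x]) (simp add: algebra_simps)
      finally show ?thesis .
    qed
    show "continuous_on UNIV f"
      unfolding f_def by (intro continuous_intros)
    show "integrable lborel f"
      unfolding f_def by (intro Bochner_Integration.integrable_diff
          Bochner_Integration.integrable_mult_right integrable_hermite_gauss_product)
  qed (rule hermite_gauss_product_tendsto_0)+
  moreover have "integral\<^sup>L lborel f =
      (LINT y|lborel. 2 * real m * (hermite (m - 1) y * hermite n y * exp (- y\<^sup>2)))
      - (LINT y|lborel. hermite m y * hermite (Suc n) y * exp (- y\<^sup>2))"
    unfolding f_def
    by (intro Bochner_Integration.integral_diff Bochner_Integration.integrable_mult_right
        integrable_hermite_gauss_product)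
  ultimately show ?thesis by simp
qed

lemma integral_hermite_gauss_product:
  "(LINT y|lborel. hermite m y * hermite n y * exp (- y\<^sup>2)) =
   (if m = n then 2 ^ n * fact n * sqrt pi else 0)"
proof (induction n arbitrary: m)
  case 0
  show ?case
  proof (cases m)
    case 0
    then show ?thesis
      using has_bochner_integral_gaussian[of 1] by (simp add: has_bochner_integral_iff)
  next
    case (Suc k)
    then show ?thesis
      using integral_hermite_gauss_Suc[of 0 k] by (simp add: mult.commute)
  qed
next
  case (Suc n)
  show ?case
    using integral_hermite_gauss_Suc[of 0 n]
    by (cases m) (simp_all add: integral_hermite_gauss_Suc Suc.IH)
qed

lemma borel_measurable_hermite_fun [measurable]: "hermite_fun \<alpha> m \<in> borel_measurable borel"
  unfolding hermite_fun_def[abs_def] by measurable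

lemma hermite_fun_mult:
  assumes "\<alpha> > 0"
  shows "hermite_fun \<alpha> m x * hermite_fun \<alpha> n x =
    (\<alpha> / pi) powr (1/2) * (2 ^ m * fact m) powr (-1/2) * (2 ^ n * fact n) powr (-1/2) *
    (hermite m (sqrt \<alpha> * x) * hermite n (sqrt \<alpha> * x) * exp (- (sqrt \<alpha> * x)\<^sup>2))"
proof -
  have "(\<alpha> / pi) powr (1/4) * (\<alpha> / pi) powr (1/4) = (\<alpha> / pi) powr (1/2)"
    by (simp flip: powr_add)
  moreover have "exp (- \<alpha> * x\<^sup>2 / 2) * exp (- \<alpha> * x\<^sup>2 / 2) = exp (- (sqrt \<alpha> * x)\<^sup>2)"
    using assms by (simp add: power_mult_distrib flip: exp_add)
  ultimately show ?thesis
    unfolding hermite_fun_def by (simp add: algebra_simps)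
qed

lemma integrable_hermite_fun_mult:
  assumes "\<alpha> > 0"
  shows "integrable lborel (\<lambda>x. hermite_fun \<alpha> m x * hermite_fun \<alpha> n x)"
proof -
  have "integrable lborel (\<lambda>x. hermite m (0 + sqrt \<alpha> * x) * hermite n (0 + sqrt \<alpha> * x)
      * exp (- (0 + sqrt \<alpha> * x)\<^sup>2))"
    using assms integrable_hermite_gauss_product
    by (subst lborel_integrable_real_affine_iff) auto
  then show ?thesis
    unfolding hermite_fun_mult[OF assms] by simp
qed

lemma hermite_fun_orthonormal:
  assumes "\<alpha> > 0"
  shows "(LINT x|lborel. hermite_fun \<alpha> m x * hermite_fun \<alpha> n x) = (if m = n then 1 else 0)"
proof -
  have sqrt_\<alpha>: "sqrt \<alpha> > 0"
    using assms by simp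
  have scaled: "(LINT x|lborel. hermite m (sqrt \<alpha> * x) * hermite n (sqrt \<alpha> * x) * exp (- (sqrt \<alpha> * x)\<^sup>2))
      = (if m = n then 2 ^ n * fact n * sqrt pi else 0) / sqrt \<alpha>"
    using lborel_integral_real_affine[of "sqrt \<alpha>" "\<lambda>y. hermite m y * hermite n y * exp (- y\<^sup>2)" 0]
      sqrt_\<alpha> integral_hermite_gauss_product[of m n]
    by (simp add: field_simps)
  have integral_eq: "(LINT x|lborel. hermite_fun \<alpha> m x * hermite_fun \<alpha> n x) =
      (\<alpha> / pi) powr (1/2) * (2 ^ m * fact m) powr (-1/2) * (2 ^ n * fact n) powr (-1/2) *
      ((if m = n then 2 ^ n * fact n * sqrt pi else 0) / sqrt \<alpha>)"
    unfolding hermite_fun_mult[OF assms] scaled[symmetric] by simp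
  show ?thesis
  proof (cases "m = n")
    case True
    define p :: real where "p = 2 ^ n * fact n"
    have "p > 0"
      by (simp add: p_def)
    then have const: "(\<alpha> / pi) powr (1/2) * p powr (-1/2) * p powr (-1/2) = sqrt \<alpha> / (sqrt pi * p)"
      using assms by (simp add: powr_half_sqrt real_sqrt_divide powr_minus_divide mult.assoc flip: powr_add)
    show ?thesis
      using integral_eq[unfolded True p_def[symmetric] const] sqrt_\<alpha> \<open>p > 0\<close> unfolding True
      by simp
  qed (simp add: integral_eq)
qed

section \<open>The transform of a Hermite function\<close>

lemma AE_summable_norm_if_summable_integral_norm:
  fixes f :: "nat \<Rightarrow> 'a \<Rightarrow> 'b::{banach, second_countable_topology}"
  assumes "\<And>i. integrable M (f i)" and "summable (\<lambda>i. LINT x|M. norm (f i x))"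
  shows "AE x in M. summable (\<lambda>i. norm (f i x))"
proof -
  have "(\<integral>\<^sup>+ x. (\<Sum>i. ennreal (norm (f i x))) \<partial>M) = (\<Sum>i. \<integral>\<^sup>+ x. ennreal (norm (f i x)) \<partial>M)"
    using assms(1) by (intro nn_integral_suminf) auto
  also have "\<dots> = (\<Sum>i. ennreal (LINT x|M. norm (f i x)))"
    using assms(1) by (intro arg_cong[where f = suminf] ext nn_integral_eq_integral integrable_norm) auto
  also have "\<dots> = ennreal (\<Sum>i. LINT x|M. norm (f i x))"
    using assms(2) by (intro suminf_ennreal2) auto
  finally have "AE x in M. (\<Sum>i. ennreal (norm (f i x))) \<noteq> \<infinity>"
    using assms(1) by (intro nn_integral_PInf_AE) auto
  then show ?thesis
    by eventually_elim (auto intro: summable_suminf_not_top)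
qed

text \<open>Term-by-term integration of \<open>\<Sum>\<^sub>m c\<^sub>m \<phi>\<^sub>m\<close> against \<open>\<phi>\<^sub>n\<close> is justified by
  \<open>\<integral> |\<phi>\<^sub>m \<phi>\<^sub>n| \<le> (\<integral> \<phi>\<^sub>m\<^sup>2 + \<integral> \<phi>\<^sub>n\<^sup>2) / 2 = 1\<close> and the absolute summability of \<open>c\<close>.\<close>
lemma integral_orthonormal_series_mult:
  fixes \<phi> :: "nat \<Rightarrow> 'a \<Rightarrow> real" and c :: "nat \<Rightarrow> complex"
  assumes [measurable]: "\<And>m. \<phi> m \<in> borel_measurable M"
    and integrable: "\<And>m n. integrable M (\<lambda>x. \<phi> m x * \<phi> n x)"
    and orthonormal: "\<And>m n. (LINT x|M. \<phi> m x * \<phi> n x) = (if m = n then 1 else 0)"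
    and summable: "summable (\<lambda>m. norm (c m))"
  shows "(LINT x|M. (\<Sum>m. c m * complex_of_real (\<phi> m x)) * complex_of_real (\<phi> n x)) = c n"
proof -
  define f where "f m x = c m * complex_of_real (\<phi> m x * \<phi> n x)" for m x
  have f_integrable: "integrable M (f m)" for m
    unfolding f_def using integrable by (intro integrable_mult_right integrable_of_real)
  then have [measurable]: "f m \<in> borel_measurable M" for m
    by (rule borel_measurable_integrable)
  have abs_product: "(LINT x|M. \<bar>\<phi> m x * \<phi> n x\<bar>) \<le> 1" for m
  proof -
    have "(LINT x|M. \<bar>\<phi> m x * \<phi> n x\<bar>) \<le> (LINT x|M. (\<phi> m x * \<phi> m x + \<phi> n x * \<phi> n x) / 2)"
    proof (rule integral_mono)
      show "\<bar>\<phi> m x * \<phi> n x\<bar> \<le> (\<phi> m x * \<phi> m x + \<phi> n x * \<phi> n x) / 2" for x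
        using sum_squares_bound[of "\<bar>\<phi> m x\<bar>" "\<bar>\<phi> n x\<bar>"] by (simp add: abs_mult power2_eq_square)
    qed (use integrable in auto)
    also have "\<dots> = 1"
      using integrable orthonormal by simp
    finally show ?thesis .
  qed
  have norm_f_summable: "summable (\<lambda>m. LINT x|M. norm (f m x))"
  proof (rule summable_comparison_test[OF _ summable])
    show "\<exists>N. \<forall>m\<ge>N. norm (LINT x|M. norm (f m x)) \<le> norm (c m)"
      unfolding f_def using abs_product
      by (auto simp: norm_mult abs_mult integral_nonneg intro!: mult_left_le)
  qed
  have f_AE_summable: "AE x in M. summable (\<lambda>m. norm (f m x))"
    by (rule AE_summable_norm_if_summable_integral_norm[OF f_integrable norm_f_summable])
  have "(LINT x|M. (\<Sum>m. c m * complex_of_real (\<phi> m x)) * complex_of_real (\<phi> n x)) =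
      (LINT x|M. (\<Sum>m. f m x))"
  proof (rule integral_cong_AE)
    show "AE x in M. (\<Sum>m. c m * complex_of_real (\<phi> m x)) * complex_of_real (\<phi> n x) = (\<Sum>m. f m x)"
      using f_AE_summable
    proof eventually_elim
      case (elim x)
      show ?case
        \<comment> \<open>Where \<open>\<phi>\<^sub>n x = 0\<close> both sides vanish, whether or not the series converges.\<close>
      proof (cases "\<phi> n x = 0")
        case False
        have "summable (\<lambda>m. f m x / complex_of_real (\<phi> n x))"
          using summable_norm_cancel[OF elim] by (rule summable_divide)
        then have "summable (\<lambda>m. c m * complex_of_real (\<phi> m x))"
          using False by (simp add: f_def)
        then show ?thesis
          unfolding f_def by (simp add: suminf_mult2 mult.assoc)
      qed (simp add: f_def)
    qed
  qed measurable
  also have "\<dots> = (\<Sum>m. LINT x|M. f m x)"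
    by (rule integral_suminf[OF f_integrable f_AE_summable norm_f_summable])
  also have "\<dots> = (\<Sum>m. if m = n then c m else 0)"
  proof -
    have "(LINT x|M. f m x) = (if m = n then c m else 0)" for m
      unfolding f_def by (simp only: integral_mult_right_zero integral_complex_of_real orthonormal) simp
    then show ?thesis by simp
  qed
  also have "\<dots> = c n"
    using sums_single[of n c] by (simp add: sums_iff)
  finally show ?thesis .
qed

lemma summable_sqrt_power_divide_fact:
  fixes u :: real
  assumes "u \<ge> 0"
  shows "summable (\<lambda>m. sqrt (u ^ m / fact m))"
proof (rule summable_comparison_test)
  have "summable (\<lambda>m. (2 * u) ^ m / fact m)"
    using exp_converges[of "2 * u"] by (simp add: sums_iff divide_inverse_commute)
  then have "summable (\<lambda>m. (2 * u) ^ m / fact m + (1/2) ^ m)"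
    by (rule summable_add) (simp add: summable_geometric)
  then show "summable (\<lambda>m. ((2 * u) ^ m / fact m + (1/2) ^ m) / 2)"
    by (rule summable_divide)
  have "norm (sqrt (u ^ m / fact m)) \<le> ((2 * u) ^ m / fact m + (1/2) ^ m) / 2" for m
  proof -
    have product: "u ^ m / fact m = (2 * u) ^ m / fact m * (1/2) ^ m"
      by (simp add: power_mult_distrib field_simps)
    have nonneg: "0 \<le> (2 * u) ^ m / fact m * (1/2) ^ m"
      using assms by simp
    have "sqrt ((2 * u) ^ m / fact m * (1/2) ^ m) \<le> ((2 * u) ^ m / fact m + (1/2) ^ m) / 2"
      using assms by (intro arith_geo_mean_sqrt) auto
    then show ?thesis
      unfolding product real_norm_def by (simp only: abs_of_nonneg[OF real_sqrt_ge_zero[OF nonneg]])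
  qed
  then show "\<exists>N. \<forall>m\<ge>N. norm (sqrt (u ^ m / fact m)) \<le> ((2 * u) ^ m / fact m + (1/2) ^ m) / 2"
    by blast
qed

lemma norm_e_fun:
  "norm (e_fun \<gamma> m z) = sqrt ((2 * (cmod z)\<^sup>2 / \<gamma>\<^sup>2) ^ m / fact m) * norm (exp (- z\<^sup>2 / complex_of_real (\<gamma>\<^sup>2)))"
proof -
  have "cmod z ^ m = sqrt ((cmod z)\<^sup>2 ^ m)"
    by (simp add: real_sqrt_power)
  then have "sqrt (2 ^ m / (\<gamma> ^ (2 * m) * fact m)) * cmod z ^ m
      = sqrt (2 ^ m / ((\<gamma>\<^sup>2) ^ m * fact m) * (cmod z)\<^sup>2 ^ m)"
    by (simp add: power_mult flip: real_sqrt_mult)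
  also have "\<dots> = sqrt ((2 * (cmod z)\<^sup>2 / \<gamma>\<^sup>2) ^ m / fact m)"
    by (simp add: power_mult_distrib power_divide)
  finally show ?thesis
    unfolding e_fun_def by (simp add: norm_mult norm_power)
qed

lemma summable_norm_e_fun: "summable (\<lambda>m. norm (e_fun \<gamma> m z))"
  unfolding norm_e_fun by (intro summable_mult2 summable_sqrt_power_divide_fact) simp

lemma rbf_SB_hermite_fun:
  assumes "\<gamma> > 0"
  shows "rbf_SB \<gamma> (hermite_fun (2 / \<gamma>\<^sup>2) n) z = e_fun \<gamma> n z"
  unfolding rbf_SB_def rbf_kernel_def
  using assms
  by (intro integral_orthonormal_series_mult integrable_hermite_fun_mult hermite_fun_orthonormal
      summable_norm_e_fun) auto

section \<open>The norm in \<open>\<H>\<^sub>\<gamma>\<close>\<close>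

lemma measurable_Complex_pair [measurable]:
  "(\<lambda>p. Complex (fst p) (snd p)) \<in> borel_measurable (lborel \<Otimes>\<^sub>M lborel)"
proof -
  have "(\<lambda>p::real \<times> real. Complex (fst p) (snd p)) = (\<lambda>p. complex_of_real (fst p) + \<i> * complex_of_real (snd p))"
    by (auto simp: complex_eq_iff)
  moreover have "(\<lambda>p::real \<times> real. complex_of_real (fst p) + \<i> * complex_of_real (snd p)) \<in> borel_measurable borel"
    by (intro borel_measurable_continuous_onI continuous_intros)
  ultimately show ?thesis
    by (simp add: measurable_lborel2 lborel_prod)
qed

lemma lborel_complex_eq_distr_pair:
  "(lborel :: complex measure) = distr (lborel \<Otimes>\<^sub>M lborel) borel (\<lambda>p. Complex (fst p) (snd p))"
proof (rule lborel_eqI)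
  fix l u :: complex
  assume le: "\<And>b. b \<in> Basis \<Longrightarrow> l \<bullet> b \<le> u \<bullet> b"
  have "Re l \<le> Re u" "Im l \<le> Im u"
    using le[of 1] le[of \<i>] by (auto simp: inner_complex_def)
  moreover have "(\<lambda>p. Complex (fst p) (snd p)) -` box l u \<inter> space (lborel \<Otimes>\<^sub>M lborel)
      = {Re l<..<Re u} \<times> {Im l<..<Im u}"
    by (auto simp: box_def Basis_complex_def inner_complex_def space_pair_measure)
  ultimately show "emeasure (distr (lborel \<Otimes>\<^sub>M lborel) borel (\<lambda>p. Complex (fst p) (snd p))) (box l u)
      = (\<Prod>b\<in>Basis. (u - l) \<bullet> b)"
    by (simp add: emeasure_distr lborel.emeasure_pair_measure_Times Basis_complex_def
        inner_complex_def ennreal_mult)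
qed simp

lemma nn_integral_lborel_complex:
  assumes [measurable]: "g \<in> borel_measurable (borel :: complex measure)"
  shows "(\<integral>\<^sup>+ z. g z \<partial>lborel) = (\<integral>\<^sup>+ a. (\<integral>\<^sup>+ b. g (Complex a b) \<partial>lborel) \<partial>lborel)"
proof -
  have "(\<integral>\<^sup>+ z. g z \<partial>lborel) = (\<integral>\<^sup>+ p. g (Complex (fst p) (snd p)) \<partial>(lborel \<Otimes>\<^sub>M lborel))"
    by (subst lborel_complex_eq_distr_pair) (simp add: nn_integral_distr)
  also have "\<dots> = (\<integral>\<^sup>+ a. (\<integral>\<^sup>+ b. g (Complex a b) \<partial>lborel) \<partial>lborel)"
    by (subst lborel.nn_integral_fst[symmetric]) auto
  finally show ?thesis .
qed

lemma nn_integral_lborel_even: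
  fixes f :: "real \<Rightarrow> ennreal"
  assumes [measurable]: "f \<in> borel_measurable borel" and even: "\<And>x. f (- x) = f x"
  shows "(\<integral>\<^sup>+ x. f x \<partial>lborel) = 2 * (\<integral>\<^sup>+ x. f x * indicator {0..} x \<partial>lborel)"
proof -
  have "(\<integral>\<^sup>+ x. f x \<partial>lborel) = (\<integral>\<^sup>+ x. f x * indicator {0..} x + f x * indicator {..<0} x \<partial>lborel)"
    by (intro nn_integral_cong) (auto split: split_indicator)
  also have "\<dots> = (\<integral>\<^sup>+ x. f x * indicator {0..} x \<partial>lborel) + (\<integral>\<^sup>+ x. f x * indicator {..<0} x \<partial>lborel)"
    by (rule nn_integral_add) auto
  also have "(\<integral>\<^sup>+ x. f x * indicator {..<0} x \<partial>lborel)
      = (\<integral>\<^sup>+ x. f (0 + (-1) * x) * indicator {..<0} (0 + (-1) * x) \<partial>lborel)"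
    by (subst nn_integral_real_affine[where c = "-1" and t = 0]) auto
  also have "\<dots> = (\<integral>\<^sup>+ x. f x * indicator {0..} x \<partial>lborel)"
    by (intro nn_integral_cong_AE AE_I[where N = "{0}"]) (auto simp: even split: split_indicator)
  finally show ?thesis
    by (simp add: mult_2)
qed

lemma nn_integral_abs_power_odd_gaussian_1:
  "(\<integral>\<^sup>+ x. ennreal (\<bar>x\<bar> ^ (2 * n + 1) * exp (- x\<^sup>2)) \<partial>lborel) = ennreal (fact n)"
proof -
  note moment = gaussian_moment_odd_pos[of n]
  have "(\<integral>\<^sup>+ x. ennreal (\<bar>x\<bar> ^ (2 * n + 1) * exp (- x\<^sup>2)) * indicator {0..} x \<partial>lborel)
      = (\<integral>\<^sup>+ x. ennreal (indicator {0..} x *\<^sub>R (exp (- x\<^sup>2) * x ^ (2 * n + 1))) \<partial>lborel)"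
    by (intro nn_integral_cong) (auto split: split_indicator)
  also have "\<dots> = ennreal (fact n / 2)"
    using moment by (subst nn_integral_eq_integral)
      (auto simp: has_bochner_integral_iff split: split_indicator)
  finally have "(\<integral>\<^sup>+ x. ennreal (\<bar>x\<bar> ^ (2 * n + 1) * exp (- x\<^sup>2)) * indicator {0..} x \<partial>lborel)
      = ennreal (fact n / 2)" .
  moreover have "(\<integral>\<^sup>+ x. ennreal (\<bar>x\<bar> ^ (2 * n + 1) * exp (- x\<^sup>2)) \<partial>lborel)
      = 2 * (\<integral>\<^sup>+ x. ennreal (\<bar>x\<bar> ^ (2 * n + 1) * exp (- x\<^sup>2)) * indicator {0..} x \<partial>lborel)"
    by (rule nn_integral_lborel_even) auto
  ultimately show ?thesis
    by (simp flip: ennreal_numeral ennreal_mult)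
qed

lemma nn_integral_abs_power_odd_gaussian:
  assumes "s > 0"
  shows "(\<integral>\<^sup>+ a. ennreal (\<bar>a\<bar> ^ (2 * n + 1) * exp (- s * a\<^sup>2)) \<partial>lborel) = ennreal (fact n / s ^ (n + 1))"
proof -
  define c where "c = 1 / sqrt s"
  have c: "c > 0" "c * c = 1 / s"
    using assms by (auto simp: c_def)
  have "(\<integral>\<^sup>+ a. ennreal (\<bar>a\<bar> ^ (2 * n + 1) * exp (- s * a\<^sup>2)) \<partial>lborel)
      = c * (\<integral>\<^sup>+ x. ennreal (\<bar>0 + c * x\<bar> ^ (2 * n + 1) * exp (- s * (0 + c * x)\<^sup>2)) \<partial>lborel)"
    using c by (subst nn_integral_real_affine[where c = c and t = 0]) auto
  also have "\<dots> = c * (\<integral>\<^sup>+ x. c ^ (2 * n + 1) * ennreal (\<bar>x\<bar> ^ (2 * n + 1) * exp (- x\<^sup>2)) \<partial>lborel)"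
  proof -
    have "\<bar>0 + c * x\<bar> ^ (2 * n + 1) * exp (- s * (0 + c * x)\<^sup>2)
        = c ^ (2 * n + 1) * (\<bar>x\<bar> ^ (2 * n + 1) * exp (- x\<^sup>2))" for x
    proof -
      have "s * (c * x)\<^sup>2 = s * (c * c) * x\<^sup>2"
        by (simp add: power2_eq_square)
      then show ?thesis
        using c assms by (simp add: abs_mult power_mult_distrib)
    qed
    then show ?thesis
      using c by (simp only:) (simp add: ennreal_mult)
  qed
  also have "\<dots> = c * (c ^ (2 * n + 1) * ennreal (fact n))"
    using nn_integral_abs_power_odd_gaussian_1[of n] by (subst nn_integral_cmult) auto
  also have "\<dots> = ennreal (c * c ^ (2 * n + 1) * fact n)"
    using c by (simp add: ennreal_mult mult.assoc)
  also have "c * c ^ (2 * n + 1) = (c * c) ^ (n + 1)"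
    by (simp add: power_mult_distrib mult_2 flip: power_add)
  also have "\<dots> = 1 / s ^ (n + 1)"
    by (simp add: c(2) power_one_over)
  finally show ?thesis
    by simp
qed

lemma nn_integral_inverse_1_plus_square: "(\<integral>\<^sup>+ t. ennreal (1 / (1 + t\<^sup>2)) \<partial>lborel) = ennreal pi"
proof -
  have "(\<integral>\<^sup>+ t. ennreal (1 / (1 + t\<^sup>2)) \<partial>lborel) = 2 * (\<integral>\<^sup>+ t. ennreal (1 / (1 + t\<^sup>2)) * indicator {0..} t \<partial>lborel)"
    by (rule nn_integral_lborel_even) auto
  also have "(\<integral>\<^sup>+ t. ennreal (1 / (1 + t\<^sup>2)) * indicator {0..} t \<partial>lborel) = ennreal (pi / 2 - arctan 0)"
    using tendsto_arctan_at_top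
    by (intro nn_integral_FTC_atLeast)
      (auto intro!: derivative_eq_intros simp: add_nonneg_eq_0_iff field_simps power2_eq_square)
  also have "2 * ennreal (pi / 2 - arctan 0) = ennreal pi"
    by (simp flip: ennreal_numeral ennreal_mult)
  finally show ?thesis .
qed

text \<open>Polar coordinates in disguise: on each line \<open>a \<noteq> 0\<close> substitute \<open>b = a t\<close>; after
  exchanging the integrals, the integral over \<open>a\<close> is an odd Gaussian moment with parameter
  \<open>k (1 + t\<^sup>2)\<close>, which leaves \<open>n! / k\<^sup>n\<^sup>+\<^sup>1\<close> times \<open>\<integral> 1 / (1 + t\<^sup>2) dt = \<pi>\<close>.\<close>
lemma nn_integral_plane_power_gaussian:
  assumes "k > 0"
  shows "(\<integral>\<^sup>+ a. (\<integral>\<^sup>+ b. ennreal ((a\<^sup>2 + b\<^sup>2) ^ n * exp (- k * (a\<^sup>2 + b\<^sup>2))) \<partial>lborel) \<partial>lborel)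
     = ennreal (pi * fact n / k ^ (n + 1))"
proof -
  define q where "q a t = ennreal (\<bar>a\<bar> ^ (2 * n + 1) * exp (- (k * (1 + t\<^sup>2)) * a\<^sup>2)) * ennreal ((1 + t\<^sup>2) ^ n)"
    for a t :: real
  have [measurable]: "case_prod q \<in> borel_measurable (lborel \<Otimes>\<^sub>M lborel)"
    unfolding q_def[abs_def] by measurable
  have substitution: "(\<integral>\<^sup>+ b. ennreal ((a\<^sup>2 + b\<^sup>2) ^ n * exp (- k * (a\<^sup>2 + b\<^sup>2))) \<partial>lborel) = (\<integral>\<^sup>+ t. q a t \<partial>lborel)"
    if "a \<noteq> 0" for a
  proof -
    have "\<bar>a\<bar> * ((a\<^sup>2 + (0 + a * t)\<^sup>2) ^ n * exp (- k * (a\<^sup>2 + (0 + a * t)\<^sup>2))) =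
        \<bar>a\<bar> ^ (2 * n + 1) * exp (- (k * (1 + t\<^sup>2)) * a\<^sup>2) * (1 + t\<^sup>2) ^ n" for t
    proof -
      have sum_squares: "a\<^sup>2 + (0 + a * t)\<^sup>2 = a\<^sup>2 * (1 + t\<^sup>2)"
        by (simp add: power2_eq_square algebra_simps)
      have "(a\<^sup>2) ^ n = \<bar>a\<bar> ^ (2 * n)"
        by (simp add: power_mult)
      then show ?thesis
        unfolding sum_squares power_mult_distrib by (simp add: power_add mult_ac)
    qed
    then have "ennreal \<bar>a\<bar> * ennreal ((a\<^sup>2 + (0 + a * t)\<^sup>2) ^ n * exp (- k * (a\<^sup>2 + (0 + a * t)\<^sup>2))) = q a t"
      for t
      unfolding q_def by (simp flip: ennreal_mult)
    moreover have "(\<integral>\<^sup>+ b. ennreal ((a\<^sup>2 + b\<^sup>2) ^ n * exp (- k * (a\<^sup>2 + b\<^sup>2))) \<partial>lborel) =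
        (\<integral>\<^sup>+ t. ennreal \<bar>a\<bar> * ennreal ((a\<^sup>2 + (0 + a * t)\<^sup>2) ^ n * exp (- k * (a\<^sup>2 + (0 + a * t)\<^sup>2))) \<partial>lborel)"
      using that by (subst nn_integral_real_affine[where c = a and t = 0]) (auto simp: nn_integral_cmult)
    ultimately show ?thesis
      by simp
  qed
  have odd_moment: "(\<integral>\<^sup>+ a. q a t \<partial>lborel) = ennreal (fact n / k ^ (n + 1)) * ennreal (1 / (1 + t\<^sup>2))" for t
  proof -
    have pos: "k * (1 + t\<^sup>2) > 0" "1 + t\<^sup>2 > 0"
      using assms by (auto simp: add_pos_nonneg)
    have "(\<integral>\<^sup>+ a. q a t \<partial>lborel) =
        (\<integral>\<^sup>+ a. ennreal (\<bar>a\<bar> ^ (2 * n + 1) * exp (- (k * (1 + t\<^sup>2)) * a\<^sup>2)) \<partial>lborel) * ennreal ((1 + t\<^sup>2) ^ n)"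
      unfolding q_def by (rule nn_integral_multc) measurable
    also have "\<dots> = ennreal (fact n / (k * (1 + t\<^sup>2)) ^ (n + 1)) * ennreal ((1 + t\<^sup>2) ^ n)"
      by (simp only: nn_integral_abs_power_odd_gaussian[OF pos(1)])
    also have "\<dots> = ennreal (fact n / (k * (1 + t\<^sup>2)) ^ (n + 1) * (1 + t\<^sup>2) ^ n)"
      using pos by (intro ennreal_mult'[symmetric]) auto
    also have "fact n / (k * (1 + t\<^sup>2)) ^ (n + 1) * (1 + t\<^sup>2) ^ n = fact n / k ^ (n + 1) * (1 / (1 + t\<^sup>2))"
    proof -
      have "F / (k * u) ^ (n + 1) * u ^ n = F / k ^ (n + 1) * (1 / u)" if "u > 0" for F u :: real
        using assms that by (simp add: power_mult_distrib field_simps)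
      then show ?thesis
        using pos(2) by blast
    qed
    also have "ennreal \<dots> = ennreal (fact n / k ^ (n + 1)) * ennreal (1 / (1 + t\<^sup>2))"
      using assms by (intro ennreal_mult') auto
    finally show ?thesis .
  qed
  have "(\<integral>\<^sup>+ a. (\<integral>\<^sup>+ b. ennreal ((a\<^sup>2 + b\<^sup>2) ^ n * exp (- k * (a\<^sup>2 + b\<^sup>2))) \<partial>lborel) \<partial>lborel)
      = (\<integral>\<^sup>+ a. (\<integral>\<^sup>+ t. q a t \<partial>lborel) \<partial>lborel)"
    using AE_lborel_singleton[of 0] substitution
    by (intro nn_integral_cong_AE) (auto elim!: eventually_mono)
  also have "\<dots> = (\<integral>\<^sup>+ t. (\<integral>\<^sup>+ a. q a t \<partial>lborel) \<partial>lborel)"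
    by (rule lborel_pair.Fubini'[symmetric]) measurable
  also have "\<dots> = ennreal (fact n / k ^ (n + 1)) * ennreal pi"
    by (simp add: odd_moment nn_integral_cmult nn_integral_inverse_1_plus_square)
  also have "\<dots> = ennreal (pi * fact n / k ^ (n + 1))"
    using assms by (simp add: mult.commute flip: ennreal_mult)
  finally show ?thesis .
qed

lemma has_bochner_integral_complex_power_gaussian:
  assumes "k > 0"
  shows "has_bochner_integral lborel (\<lambda>z::complex. cmod z ^ (2 * n) * exp (- k * (cmod z)\<^sup>2))
    (pi * fact n / k ^ (n + 1))"
proof (rule has_bochner_integral_nn_integral)
  show "(\<integral>\<^sup>+ z. ennreal (cmod z ^ (2 * n) * exp (- k * (cmod z)\<^sup>2)) \<partial>lborel) = ennreal (pi * fact n / k ^ (n + 1))"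
    using nn_integral_plane_power_gaussian[OF assms, of n]
    by (subst nn_integral_lborel_complex) (simp_all add: power_mult cmod_power2)
qed (use assms in auto)

lemma H_weight_eq: "H_weight \<gamma> z = exp (- 4 * (Im z)\<^sup>2 / \<gamma>\<^sup>2)"
proof -
  have "(z - cnj z)\<^sup>2 / complex_of_real (\<gamma>\<^sup>2) = complex_of_real (- 4 * (Im z)\<^sup>2 / \<gamma>\<^sup>2)"
    by (simp add: complex_eq_iff power2_eq_square)
  then show ?thesis
    unfolding H_weight_def by (simp only: exp_of_real Re_complex_of_real)
qed

lemma norm_e_fun_squared_mult_H_weight:
  "(cmod (e_fun \<gamma> n z))\<^sup>2 * H_weight \<gamma> z =
   2 ^ n / (\<gamma> ^ (2 * n) * fact n) * (cmod z ^ (2 * n) * exp (- (2 / \<gamma>\<^sup>2) * (cmod z)\<^sup>2))"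
proof -
  have coefficient: "(sqrt (2 ^ n / (\<gamma> ^ (2 * n) * fact n)))\<^sup>2 = 2 ^ n / (\<gamma> ^ (2 * n) * fact n)"
    by (simp add: zero_le_divide_iff)
  have power: "(cmod z ^ n)\<^sup>2 = cmod z ^ (2 * n)"
    by (metis power_mult mult.commute)
  have gauss: "(cmod (exp (- z\<^sup>2 / complex_of_real (\<gamma>\<^sup>2))))\<^sup>2 = exp (- 2 * ((Re z)\<^sup>2 - (Im z)\<^sup>2) / \<gamma>\<^sup>2)"
    by (simp add: norm_exp_eq_Re Re_divide_of_real power2_eq_square flip: exp_add)
  have "- 2 * ((Re z)\<^sup>2 - (Im z)\<^sup>2) / \<gamma>\<^sup>2 + - 4 * (Im z)\<^sup>2 / \<gamma>\<^sup>2 = - (2 / \<gamma>\<^sup>2) * (cmod z)\<^sup>2"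
    by (simp add: cmod_power2 add_divide_distrib[symmetric] algebra_simps)
  then have weight: "exp (- 2 * ((Re z)\<^sup>2 - (Im z)\<^sup>2) / \<gamma>\<^sup>2) * exp (- 4 * (Im z)\<^sup>2 / \<gamma>\<^sup>2)
      = exp (- (2 / \<gamma>\<^sup>2) * (cmod z)\<^sup>2)"
    by (metis exp_add)
  show ?thesis
    unfolding e_fun_def H_weight_eq
    by (simp only: norm_mult norm_of_real norm_power power_mult_distrib power2_abs
        coefficient power gauss mult.assoc weight)
qed

lemma has_bochner_integral_e_fun_H_weight:
  assumes "\<gamma> > 0"
  shows "has_bochner_integral lborel (\<lambda>z. (cmod (e_fun \<gamma> n z))\<^sup>2 * H_weight \<gamma> z) (pi * \<gamma>\<^sup>2 / 2)"
proof -
  have "(2 / \<gamma>\<^sup>2) ^ (n + 1) = 2 ^ n * 2 / (\<gamma> ^ (2 * n) * \<gamma>\<^sup>2)"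
    by (simp add: power_divide power_add mult_ac flip: power_mult)
  then have "2 ^ n / (\<gamma> ^ (2 * n) * fact n) * (pi * fact n / (2 / \<gamma>\<^sup>2) ^ (n + 1)) = pi * \<gamma>\<^sup>2 / 2"
    using assms by (simp add: field_simps)
  moreover have "has_bochner_integral lborel
      (\<lambda>z. 2 ^ n / (\<gamma> ^ (2 * n) * fact n) * (cmod z ^ (2 * n) * exp (- (2 / \<gamma>\<^sup>2) * (cmod z)\<^sup>2)))
      (2 ^ n / (\<gamma> ^ (2 * n) * fact n) * (pi * fact n / (2 / \<gamma>\<^sup>2) ^ (n + 1)))"
    using assms by (intro has_bochner_integral_mult_right has_bochner_integral_complex_power_gaussian) simp
  ultimately show ?thesis
    unfolding norm_e_fun_squared_mult_H_weight by metis
qed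

lemma holomorphic_e_fun: "e_fun \<gamma> n holomorphic_on S"
  unfolding e_fun_def[abs_def] by (intro holomorphic_intros) simp

theorem mainTheorem11:
  fixes \<gamma> \<alpha> :: real and n :: nat
  assumes "\<gamma> > 0" and "\<alpha> = 2 / \<gamma>\<^sup>2"
  shows "(\<forall>z. rbf_SB \<gamma> (hermite_fun \<alpha> n) z = e_fun \<gamma> n z)
    \<and> rbf_SB \<gamma> (hermite_fun \<alpha> n) \<in> H_space \<gamma>
    \<and> H_norm \<gamma> (rbf_SB \<gamma> (hermite_fun \<alpha> n)) = L2_norm_real (hermite_fun \<alpha> n)
    \<and> L2_norm_real (hermite_fun \<alpha> n) = 1"
proof -
  have transform: "rbf_SB \<gamma> (hermite_fun \<alpha> n) = e_fun \<gamma> n"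
    using rbf_SB_hermite_fun[OF assms(1)] assms(2) by blast
  have "\<alpha> > 0"
    using assms by simp
  then have L2_norm: "L2_norm_real (hermite_fun \<alpha> n) = 1"
    using hermite_fun_orthonormal[of \<alpha> n n] unfolding L2_norm_real_def by (simp add: power2_eq_square)
  note H_integral = has_bochner_integral_e_fun_H_weight[OF assms(1), of n]
  have "e_fun \<gamma> n \<in> H_space \<gamma>"
    using H_integral holomorphic_e_fun unfolding H_space_def by (auto simp: has_bochner_integral_iff)
  moreover have "H_norm \<gamma> (e_fun \<gamma> n) = 1"
    using H_integral assms(1) unfolding H_norm_def by (simp add: has_bochner_integral_iff)
  ultimately show ?thesis
    using transform L2_norm by simp
qed

end
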